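(* Let $c^1,\dots,c^n$ be a lattice basis of $\mathbb{Z}^n$, $K=\{x\in\mathbb{R}^n: c^ix\ge0,\ i=1,\dots,n\}$, and $\bar x\in K\cap\mathbb{Z}^n$. Then the recession cone of $Q(\bar x)$ is $K$, and $Q(\bar x)$ is a full-dimensional polyhedron. Moreover, if $\bar x\ne0$ and $\ell:=\ell(\bar x)$, the extreme points of $Q(\bar x)$ are precisely $v^1,\dots,v^\ell$, where $v^\ell=\bar x$ and, for $k=1,\dots,\ell-1$, $v^k$ is the unique point satisfying $c^iv^k=c^i\bar x$ for $i=1,\dots,k-1$, $c^kv^k=c^k\bar x+1$, and $c^iv^k=0$ for $i=k+1,\dots,n$.
   Context: A lattice basis of $\mathbb{Z}^n$ is a set of $n$ linearly independent vectors $c^1,\dots,c^n\in\mathbb{Z}^n$ such that every $v\in\mathbb{Z}^n$ equals $\sum_i\lambda_ic^i$ with all $\lambda_i\in\mathbb{Z}$. The associated lexicographic order: $x\prec y$ iff $x\ne y$ and $c^ix<c^iy$, where $i$ is the smallest index with $c^ix\ne c^iy$; $\preceq,\succeq$ as usual. $Q(\bar x):=\operatorname{conv}\{x\in K\cap\mathbb{Z}^n: x\succeq\bar x\}$. For $\bar x\in K\setminus\{0\}$, the leading index $\ell(\bar x)$ is the largest $i$ with $c^i\bar x>0$. *)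

theory Defs
  imports "HOL-Analysis.Analysis"
begin

text \<open>Points of R^n are vectors of type real^'n, n = CARD('n). The basis vectors
  c^1..c^n are indexed by the natural numbers 1..n; c^i x is the inner product.\<close>

definition int_vec :: "real^'n \<Rightarrow> bool" where
  "int_vec x \<longleftrightarrow> (\<forall>j. x $ j \<in> \<int>)"

definition lattice_basis :: "(nat \<Rightarrow> real^'n) \<Rightarrow> bool" where
  "lattice_basis c \<longleftrightarrow>
     (\<forall>i\<in>{1..CARD('n)}. int_vec (c i)) \<and>
     inj_on c {1..CARD('n)} \<and> independent (c ` {1..CARD('n)}) \<and>
     (\<forall>v. int_vec v \<longrightarrow>
        (\<exists>lam :: nat \<Rightarrow> int. v = (\<Sum>i=1..CARD('n). of_int (lam i) *\<^sub>R c i)))"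

definition lex_less :: "(nat \<Rightarrow> real^'n) \<Rightarrow> real^'n \<Rightarrow> real^'n \<Rightarrow> bool" where
  "lex_less c x y \<longleftrightarrow> x \<noteq> y \<and>
     (\<exists>i\<in>{1..CARD('n)}. (\<forall>j\<in>{1..<i}. c j \<bullet> x = c j \<bullet> y) \<and> c i \<bullet> x < c i \<bullet> y)"

definition lex_le :: "(nat \<Rightarrow> real^'n) \<Rightarrow> real^'n \<Rightarrow> real^'n \<Rightarrow> bool" where
  "lex_le c x y \<longleftrightarrow> x = y \<or> lex_less c x y"

definition coneK :: "(nat \<Rightarrow> real^'n) \<Rightarrow> (real^'n) set" where
  "coneK c = {x. \<forall>i\<in>{1..CARD('n)}. 0 \<le> c i \<bullet> x}"

definition Qset :: "(nat \<Rightarrow> real^'n) \<Rightarrow> real^'n \<Rightarrow> (real^'n) set" where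
  "Qset c xb = convex hull {x \<in> coneK c. int_vec x \<and> lex_le c xb x}"

definition lead_idx :: "(nat \<Rightarrow> real^'n) \<Rightarrow> real^'n \<Rightarrow> nat" where
  "lead_idx c x = Max {i\<in>{1..CARD('n)}. c i \<bullet> x > 0}"

definition rec_cone :: "('a::real_vector) set \<Rightarrow> 'a set" where
  "rec_cone P = {d. \<forall>x\<in>P. \<forall>t::real. t \<ge> 0 \<longrightarrow> x + t *\<^sub>R d \<in> P}"

end

theory Submission
  imports Defs
begin

(* The coordinate map x \<mapsto> (c^1 x, ..., c^n x) is a linear bijection of R^n mapping Z^n onto
   Z^n, so K is the cone generated by the integral dual basis. Translating by a dual basis vector
   preserves the integer points of K lexicographically above xb; hence Q + K \<subseteq> Q, which gives
   rec Q = K and full dimension. Comparing such a point s with xb at the first coordinate where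
   they differ shows that s - xb or some s - v^k lies in K, so Q = conv {xb, v^1, ..., v^(l-1)} + K:
   a polyhedron whose extreme points are among these generators. Conversely, each generator is the
   strict lexicographic minimum of the integer points of Q for a suitable ordering of the basis
   (the given one for xb, the one with c^k moved last for v^k), and a strict lexicographic minimum
   of a set is an extreme point of its convex hull. *)

section \<open>Recession cones and Minkowski sums\<close>

lemma convex_cone_rec_cone: "convex_cone (rec_cone S)"
proof -
  have "x + t *\<^sub>R (d1 + d2) \<in> S"
    if "d1 \<in> rec_cone S" "d2 \<in> rec_cone S" "x \<in> S" "0 \<le> t" for d1 d2 x and t :: real
  proof -
    have "(x + t *\<^sub>R d1) + t *\<^sub>R d2 \<in> S" using that unfolding rec_cone_def by blast
    then show ?thesis by (simp add: scaleR_add_right add.assoc)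
  qed
  then show ?thesis unfolding convex_cone_iff
    by (auto simp: rec_cone_def zero_le_mult_iff)
qed

lemma rec_cone_add:
  assumes "d \<in> rec_cone S" "x \<in> S"
  shows "x + d \<in> S"
proof -
  have "\<forall>t\<ge>0. x + t *\<^sub>R d \<in> S" using assms unfolding rec_cone_def by blast
  then show ?thesis by (auto dest: spec[of _ 1])
qed

lemma rec_coneI_convex:
  assumes "convex S" and step: "\<And>x. x \<in> S \<Longrightarrow> x + d \<in> S"
  shows "d \<in> rec_cone S"
  unfolding rec_cone_def
proof (intro CollectI ballI allI impI)
  fix x and t :: real
  assume x: "x \<in> S" and t: "0 \<le> t"
  have multiple: "x + real N *\<^sub>R d \<in> S" for N
  proof (induction N)
    case (Suc N)
    then show ?case using step[of "x + real N *\<^sub>R d"] by (simp add: algebra_simps)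
  qed (simp add: x)
  define N where "N = nat \<lceil>t\<rceil> + 1"
  have N: "t < real N" "0 < real N" using t unfolding N_def by linarith+
  have "(1 - t / N) *\<^sub>R x + (t / N) *\<^sub>R (x + real N *\<^sub>R d) \<in> S"
    using N t by (intro convexD_alt[OF \<open>convex S\<close> x multiple]) auto
  also have "(1 - t / N) *\<^sub>R x + (t / N) *\<^sub>R (x + real N *\<^sub>R d) = x + t *\<^sub>R d"
    using N by (simp add: algebra_simps)
  finally show "x + t *\<^sub>R d \<in> S" .
qed

lemma convex_cone_sum:
  assumes "convex_cone C" "\<And>i. i \<in> A \<Longrightarrow> f i \<in> C"
  shows "sum f A \<in> C"
  using assms(2)
proof (induction A rule: infinite_finite_induct)
  case (insert i A)
  then show ?case using assms(1) by (simp add: convex_cone_add)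
qed (use assms(1) convex_cone_contains_0 in auto)

lemma polyhedron_slice:
  fixes P :: "('a::euclidean_space \<times> real) set"
  assumes "polyhedron P"
  shows "polyhedron {x. (x, t) \<in> P}"
proof -
  obtain F where F: "finite F" "P = \<Inter>F" "\<forall>h\<in>F. \<exists>a b. a \<noteq> 0 \<and> h = {x. a \<bullet> x \<le> b}"
    using assms unfolding polyhedron_def by blast
  have "polyhedron {x. (x, t) \<in> h}" if h: "h \<in> F" for h
  proof -
    obtain a b where ab: "h = {x. a \<bullet> x \<le> b}" using F(3) h by meson
    have "{x. (x, t) \<in> h} = {x. fst a \<bullet> x \<le> b - snd a * t}"
      unfolding ab by (cases a) (auto simp: algebra_simps)
    then show ?thesis by (simp add: polyhedron_halfspace_le)
  qed
  moreover have "{x. (x, t) \<in> P} = (\<Inter>h\<in>F. {x. (x, t) \<in> h})" unfolding F(2) by blast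
  ultimately show ?thesis using F(1) by (auto intro: polyhedron_Inter)
qed

(* Homogenization: the sum is the slice at height 1 of the cone generated by V \<times> {1} and D \<times> {0}. *)
lemma polyhedron_convex_hull_plus_convex_cone_hull:
  fixes V D :: "'a::euclidean_space set"
  assumes "finite V" "finite D"
  shows "polyhedron (convex hull V + convex_cone hull D)"
proof -
  define G where "G = V \<times> {1::real} \<union> (\<lambda>d. (d, 0)) ` D"
  have lin: "linear (\<lambda>d::'a. (d, 0::real))" by (auto intro: linearI)
  have height_one: "(p, 1) \<in> convex_cone hull (V \<times> {1::real}) \<longleftrightarrow> p \<in> convex hull V" for p
    by (auto simp: convex_cone_hull_convex_hull convex_hull_Times zero_prod_def)
  have hull_G: "convex_cone hull G =
      (\<Union>a \<in> convex_cone hull (V \<times> {1}). \<Union>d \<in> convex_cone hull D. {a + (d, 0)})"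
    unfolding G_def convex_cone_hull_Un convex_cone_hull_linear_image[OF lin] by blast
  have "(x, 1) \<in> convex_cone hull G \<longleftrightarrow> (\<exists>d \<in> convex_cone hull D. x - d \<in> convex hull V)" for x
  proof
    assume "\<exists>d \<in> convex_cone hull D. x - d \<in> convex hull V"
    then obtain d where d: "d \<in> convex_cone hull D" and "x - d \<in> convex hull V" by blast
    then have "(x - d, 1) \<in> convex_cone hull (V \<times> {1::real})" using height_one by blast
    moreover have "(x, 1::real) = (x - d, 1) + (d, 0)" by simp
    ultimately show "(x, 1) \<in> convex_cone hull G" unfolding hull_G using d by blast
  next
    assume "(x, 1) \<in> convex_cone hull G"
    then obtain a d where "a \<in> convex_cone hull (V \<times> {1::real})" "d \<in> convex_cone hull D"
      and "(x, 1) = a + (d, 0)"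
      unfolding hull_G by blast
    moreover from this(3) have "a = (x - d, 1)" by (cases a) auto
    ultimately show "\<exists>d \<in> convex_cone hull D. x - d \<in> convex hull V" using height_one by blast
  qed
  moreover have "x \<in> convex hull V + convex_cone hull D \<longleftrightarrow>
      (\<exists>d \<in> convex_cone hull D. x - d \<in> convex hull V)" for x
    by (metis add_diff_cancel diff_add_cancel set_plus_elim set_plus_intro)
  ultimately have "convex hull V + convex_cone hull D = {x. (x, 1) \<in> convex_cone hull G}"
    by blast
  moreover have "finite G" unfolding G_def using assms by simp
  ultimately show ?thesis using polyhedron_slice polyhedron_convex_cone_hull by metis
qed

lemma extreme_point_of_convex_hull_plus_cone:
  assumes "convex_cone C" and x: "x extreme_point_of (convex hull V + C)"
  shows "x \<in> V"
proof -
  obtain p d where p: "p \<in> convex hull V" and d: "d \<in> C" and xpd: "x = p + d"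
    using x by (auto simp: extreme_point_of_def elim: set_plus_elim)
  have "p \<in> convex hull V + C" "p + 2 *\<^sub>R d \<in> convex hull V + C"
    using set_plus_intro[OF p convex_cone_contains_0[OF assms(1)]]
      set_plus_intro[OF p, of "2 *\<^sub>R d"] assms(1) d by (auto simp: convex_cone_iff)
  moreover have "x = midpoint p (p + 2 *\<^sub>R d)"
    unfolding xpd midpoint_def by (simp add: algebra_simps flip: scaleR_add_left)
  ultimately have "d = 0"
    using x midpoint_in_open_segment[of p "p + 2 *\<^sub>R d"] unfolding extreme_point_of_def by force
  have "convex hull V \<subseteq> convex hull V + C"
    using assms(1) convex_cone_contains_0 by (force simp: set_plus_def)
  then have "x extreme_point_of convex hull V"
    using x p unfolding xpd \<open>d = 0\<close> extreme_point_of_def by auto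
  then show ?thesis by (rule extreme_point_of_convex_hull)
qed

section \<open>Lexicographic positivity\<close>

definition lex_pos :: "(nat \<Rightarrow> 'a::real_inner) \<Rightarrow> nat \<Rightarrow> 'a \<Rightarrow> bool" where
  "lex_pos F m d \<longleftrightarrow> (\<exists>i\<in>{1..m}. (\<forall>j\<in>{1..<i}. F j \<bullet> d = 0) \<and> 0 < F i \<bullet> d)"

lemma not_lex_pos_zero [simp]: "\<not> lex_pos F m 0"
  by (simp add: lex_pos_def)

lemma lex_pos_scaleR: "lex_pos F m d \<Longrightarrow> 0 < t \<Longrightarrow> lex_pos F m (t *\<^sub>R d)"
  by (auto simp: lex_pos_def)

lemma lex_pos_add:
  assumes "lex_pos F m d" "lex_pos F m e"
  shows "lex_pos F m (d + e)"
proof -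
  obtain i where i: "i \<in> {1..m}" "\<forall>j\<in>{1..<i}. F j \<bullet> d = 0" "0 < F i \<bullet> d"
    using assms(1) unfolding lex_pos_def by blast
  obtain k where k: "k \<in> {1..m}" "\<forall>j\<in>{1..<k}. F j \<bullet> e = 0" "0 < F k \<bullet> e"
    using assms(2) unfolding lex_pos_def by blast
  show ?thesis
  proof (cases "i \<le> k")
    case True
    then have "0 \<le> F i \<bullet> e" using i(1) k by (cases "i = k") auto
    with i k True show ?thesis
      unfolding lex_pos_def by (intro bexI[of _ i]) (auto simp: inner_add_right)
  next
    case False
    then have "F k \<bullet> d = 0" using i(2) k(1) by simp
    with i k False show ?thesis
      unfolding lex_pos_def by (intro bexI[of _ k]) (auto simp: inner_add_right)
  qed
qed

lemma lex_pos_first_nonneg: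
  assumes "lex_pos F m d" "i \<in> {1..m}" "\<forall>j\<in>{1..<i}. F j \<bullet> d = 0"
  shows "0 \<le> F i \<bullet> d"
proof -
  obtain k where k: "k \<in> {1..m}" "\<forall>j\<in>{1..<k}. F j \<bullet> d = 0" "0 < F k \<bullet> d"
    using assms(1) unfolding lex_pos_def by blast
  consider "k < i" | "k = i" | "i < k" by linarith
  then show ?thesis
  proof cases
    case 1
    then have "F k \<bullet> d = 0" using assms(3) k(1) by simp
    then show ?thesis using k(3) by simp
  next
    case 3
    then have "F i \<bullet> d = 0" using k(2) assms(2) by simp
    then show ?thesis by simp
  qed (use k in simp)
qed

lemma lex_posI:
  assumes "\<exists>i\<in>{1..m}. F i \<bullet> d \<noteq> 0"
    and "\<And>i. i \<in> {1..m} \<Longrightarrow> \<forall>j\<in>{1..<i}. F j \<bullet> d = 0 \<Longrightarrow> 0 \<le> F i \<bullet> d"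
  shows "lex_pos F m d"
proof -
  obtain i where i: "i \<in> {1..m}" "F i \<bullet> d \<noteq> 0"
    and least: "\<And>j. j < i \<Longrightarrow> \<not> (j \<in> {1..m} \<and> F j \<bullet> d \<noteq> 0)"
    using exists_least_iff[of "\<lambda>i. i \<in> {1..m} \<and> F i \<bullet> d \<noteq> 0"] assms(1) by blast
  have below: "\<forall>j\<in>{1..<i}. F j \<bullet> d = 0"
    using least i(1) by auto
  then have "0 < F i \<bullet> d" using assms(2)[OF i(1)] i(2) by linarith
  then show ?thesis unfolding lex_pos_def using i(1) below by blast
qed

lemma lex_pos_uminus: "lex_pos F m d \<Longrightarrow> \<not> lex_pos F m (- d)"
  using lex_pos_add[of F m d "- d"] by (metis add.right_inverse not_lex_pos_zero)

lemma extreme_point_of_convex_hull_lex_min: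
  assumes v: "v \<in> S" and lex_min: "\<And>s. s \<in> S \<Longrightarrow> s \<noteq> v \<Longrightarrow> lex_pos F m (s - v)"
  shows "v extreme_point_of convex hull S"
proof -
  define D where "D = insert 0 {d. lex_pos F m d}"
  have D: "convex_cone D"
    unfolding convex_cone_iff D_def
    by (auto simp: lex_pos_add lex_pos_scaleR less_eq_real_def)
  have "convex {x. x - v \<in> D}"
  proof (rule convexI)
    fix x y and u w :: real
    assume "x \<in> {x. x - v \<in> D}" "y \<in> {x. x - v \<in> D}" "0 \<le> u" "0 \<le> w" "u + w = 1"
    moreover have "u *\<^sub>R x + w *\<^sub>R y - v = u *\<^sub>R (x - v) + w *\<^sub>R (y - v)"
      using \<open>u + w = 1\<close> by (simp add: algebra_simps flip: scaleR_add_left)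
    ultimately show "u *\<^sub>R x + w *\<^sub>R y \<in> {x. x - v \<in> D}"
      using D unfolding convex_cone_iff by simp
  qed
  moreover have "S \<subseteq> {x. x - v \<in> D}" using lex_min unfolding D_def by auto
  ultimately have hull: "a - v \<in> D" if "a \<in> convex hull S" for a
    using hull_minimal[of S "{x. x - v \<in> D}" convex] that by blast
  have False
    if a: "a \<in> convex hull S" and b: "b \<in> convex hull S" and "v \<in> open_segment a b" for a b
  proof -
    obtain u where u: "a \<noteq> b" "0 < u" "u < 1" "v = (1 - u) *\<^sub>R a + u *\<^sub>R b"
      using \<open>v \<in> open_segment a b\<close> unfolding in_segment by blast
    have "(1 - u) *\<^sub>R (a - v) \<in> D" "u *\<^sub>R (b - v) \<in> D"
      using hull[OF a] hull[OF b] u(2,3) D unfolding convex_cone_iff by auto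
    moreover have "(1 - u) *\<^sub>R (a - v) = - (u *\<^sub>R (b - v))"
      using u(4) by (simp add: algebra_simps)
    ultimately have "u *\<^sub>R (b - v) = 0" "(1 - u) *\<^sub>R (a - v) = 0"
      using lex_pos_uminus unfolding D_def by auto
    then show False using u by auto
  qed
  then show ?thesis using v unfolding extreme_point_of_def by (auto intro: hull_inc)
qed

section \<open>Lattice bases\<close>

lemma Ints_less_imp_add_one_le: "a \<in> \<int> \<Longrightarrow> b \<in> \<int> \<Longrightarrow> a < b \<Longrightarrow> a + 1 \<le> (b::real)"
  by (elim Ints_cases) simp

lemma int_vec_inner: "int_vec (a::real^'n) \<Longrightarrow> int_vec b \<Longrightarrow> a \<bullet> b \<in> \<int>"
  unfolding int_vec_def inner_vec_def by (auto intro!: Ints_sum Ints_mult)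

lemma int_vec_add: "int_vec x \<Longrightarrow> int_vec y \<Longrightarrow> int_vec (x + y)"
  unfolding int_vec_def by auto

lemma lattice_basis_int_vec: "lattice_basis c \<Longrightarrow> i \<in> {1..CARD('n)} \<Longrightarrow> int_vec (c i :: real^'n)"
  unfolding lattice_basis_def by blast

lemma lattice_basis_coordinate:
  fixes c :: "nat \<Rightarrow> real^'n"
  assumes "lattice_basis c"
  obtains lam :: "nat \<Rightarrow> int" where "\<And>x. x $ j = (\<Sum>i=1..CARD('n). of_int (lam i) * (c i \<bullet> x))"
proof -
  have "int_vec (axis j (1::real))" by (simp add: int_vec_def axis_def)
  then obtain lam :: "nat \<Rightarrow> int" where lam: "axis j 1 = (\<Sum>i=1..CARD('n). of_int (lam i) *\<^sub>R c i)"
    using assms unfolding lattice_basis_def by blast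
  have "x $ j = (\<Sum>i=1..CARD('n). of_int (lam i) * (c i \<bullet> x))" for x
  proof -
    have "x $ j = x \<bullet> axis j 1" by (simp add: inner_axis)
    then show ?thesis by (simp add: lam inner_sum_right inner_commute)
  qed
  then show thesis by (rule that)
qed

lemma lattice_basis_eqI:
  fixes c :: "nat \<Rightarrow> real^'n"
  assumes "lattice_basis c" "\<And>i. i \<in> {1..CARD('n)} \<Longrightarrow> c i \<bullet> x = c i \<bullet> y"
  shows "x = y"
proof (rule vec_eq_iff[THEN iffD2, rule_format])
  fix j
  obtain lam :: "nat \<Rightarrow> int" where "\<And>x. x $ j = (\<Sum>i=1..CARD('n). of_int (lam i) * (c i \<bullet> x))"
    using lattice_basis_coordinate[OF assms(1)] by blast
  then show "x $ j = y $ j" using assms(2) by simp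
qed

lemma lattice_basis_int_vecI:
  fixes c :: "nat \<Rightarrow> real^'n"
  assumes "lattice_basis c" "\<And>i. i \<in> {1..CARD('n)} \<Longrightarrow> c i \<bullet> x \<in> \<int>"
  shows "int_vec x"
  unfolding int_vec_def
proof
  fix j
  obtain lam :: "nat \<Rightarrow> int" where "\<And>x. x $ j = (\<Sum>i=1..CARD('n). of_int (lam i) * (c i \<bullet> x))"
    using lattice_basis_coordinate[OF assms(1)] by blast
  then show "x $ j \<in> \<int>" using assms(2) by (auto intro!: Ints_sum Ints_mult)
qed

lemma lattice_basis_inner_surj:
  fixes c :: "nat \<Rightarrow> real^'n"
  assumes "lattice_basis c"
  shows "\<exists>x. \<forall>i\<in>{1..CARD('n)}. c i \<bullet> x = a i"
proof -
  obtain h :: "'n \<Rightarrow> nat" where h: "bij_betw h UNIV {1..CARD('n)}"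
    using finite_same_card_bij[of "UNIV::'n set" "{1..CARD('n)}"] by auto
  define T where "T x = (\<chi> j. c (h j) \<bullet> x)" for x :: "real^'n"
  have "linear T" unfolding T_def
    by (auto intro!: linearI simp: vec_eq_iff inner_add_right)
  moreover have "inj T"
  proof (rule injI)
    fix x y assume "T x = T y"
    then have "c (h j) \<bullet> x = c (h j) \<bullet> y" for j by (simp add: T_def vec_eq_iff)
    then show "x = y"
      using h by (intro lattice_basis_eqI[OF assms]) (metis bij_betw_inv_into_right)
  qed
  ultimately obtain x where x: "T x = (\<chi> j. a (h j))"
    using linear_injective_imp_surjective by (metis surjD)
  have "c i \<bullet> x = a i" if "i \<in> {1..CARD('n)}" for i
    using x h that unfolding T_def vec_eq_iff by (metis bij_betw_inv_into_right vec_lambda_beta)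
  then show ?thesis by blast
qed

lemma lex_le_iff_lex_pos:
  "lex_le c x y \<longleftrightarrow> x = y \<or> lex_pos c CARD('n) (y - x :: real^'n)"
proof -
  have "(\<forall>j\<in>{1..<i}. c j \<bullet> x = c j \<bullet> y) \<longleftrightarrow> (\<forall>j\<in>{1..<i}. c j \<bullet> (y - x) = 0)"
    and "c i \<bullet> x < c i \<bullet> y \<longleftrightarrow> 0 < c i \<bullet> (y - x)" for i
    by (auto simp: inner_diff_right)
  then have "lex_less c x y \<longleftrightarrow> x \<noteq> y \<and> lex_pos c CARD('n) (y - x)"
    unfolding lex_less_def lex_pos_def by presburger
  moreover have "lex_pos c CARD('n) (y - x) \<Longrightarrow> x \<noteq> y" by auto
  ultimately show ?thesis unfolding lex_le_def by blast
qed

lemma lex_pos_if_coneK: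
  fixes c :: "nat \<Rightarrow> real^'n"
  assumes "lattice_basis c" "d \<in> coneK c" "d \<noteq> 0"
  shows "lex_pos c CARD('n) d"
proof (rule lex_posI)
  show "\<exists>i\<in>{1..CARD('n)}. c i \<bullet> d \<noteq> 0"
  proof (rule ccontr)
    assume "\<not> ?thesis"
    then have "d = 0" by (intro lattice_basis_eqI[OF assms(1)]) auto
    then show False using assms(3) by simp
  qed
qed (use assms(2) in \<open>auto simp: coneK_def\<close>)

lemma lex_le_add_coneK:
  fixes c :: "nat \<Rightarrow> real^'n"
  assumes "lattice_basis c" "lex_le c x y" "d \<in> coneK c"
  shows "lex_le c x (y + d)"
proof (cases "d = 0")
  case False
  then have "lex_pos c CARD('n) d" using lex_pos_if_coneK assms(1,3) by blast
  moreover have "y + d - x = (y - x) + d" by simp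
  ultimately show ?thesis
    using assms(2) unfolding lex_le_iff_lex_pos by (metis add_diff_cancel_left' lex_pos_add)
qed (use assms(2) in simp)

lemma convex_cone_coneK: "convex_cone (coneK c)"
  unfolding convex_cone_iff coneK_def by (auto simp: inner_add_right)

lemma rec_cone_subset_coneK:
  fixes c :: "nat \<Rightarrow> real^'n"
  assumes "P \<subseteq> coneK c" "x \<in> P"
  shows "rec_cone P \<subseteq> coneK c"
proof
  fix d assume d: "d \<in> rec_cone P"
  have "0 \<le> c i \<bullet> d" if i: "i \<in> {1..CARD('n)}" for i
  proof (rule ccontr)
    assume "\<not> 0 \<le> c i \<bullet> d"
    define t where "t = (c i \<bullet> x + 1) / - (c i \<bullet> d)"
    have "0 \<le> c i \<bullet> x" using assms i by (auto simp: coneK_def)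
    then have "0 \<le> t" using \<open>\<not> 0 \<le> c i \<bullet> d\<close> unfolding t_def by (intro divide_nonneg_pos) auto
    then have "x + t *\<^sub>R d \<in> coneK c" using d assms unfolding rec_cone_def by blast
    then have "0 \<le> c i \<bullet> x + t * (c i \<bullet> d)" using i by (simp add: coneK_def inner_add_right)
    moreover have "t * (c i \<bullet> d) = - (c i \<bullet> x + 1)" using \<open>\<not> 0 \<le> c i \<bullet> d\<close> by (simp add: t_def)
    ultimately show False by simp
  qed
  then show "d \<in> coneK c" by (simp add: coneK_def)
qed

definition dual_basis :: "(nat \<Rightarrow> real^'n) \<Rightarrow> nat \<Rightarrow> real^'n" where
  "dual_basis c k = (SOME x. \<forall>i\<in>{1..CARD('n)}. c i \<bullet> x = (if i = k then 1 else 0))"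

lemma inner_dual_basis:
  fixes c :: "nat \<Rightarrow> real^'n"
  assumes "lattice_basis c" "i \<in> {1..CARD('n)}"
  shows "c i \<bullet> dual_basis c k = (if i = k then 1 else 0)"
proof -
  have "\<exists>x. \<forall>i\<in>{1..CARD('n)}. c i \<bullet> x = (if i = k then 1 else 0)"
    by (rule lattice_basis_inner_surj[OF assms(1)])
  then have "\<forall>i\<in>{1..CARD('n)}. c i \<bullet> dual_basis c k = (if i = k then 1 else 0)"
    unfolding dual_basis_def by (rule someI_ex)
  then show ?thesis using assms(2) by (rule bspec)
qed

lemma coneK_eq_convex_cone_hull_dual_basis:
  fixes c :: "nat \<Rightarrow> real^'n"
  assumes "lattice_basis c"
  shows "coneK c = convex_cone hull (dual_basis c ` {1..CARD('n)})"
proof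
  show "convex_cone hull (dual_basis c ` {1..CARD('n)}) \<subseteq> coneK c"
    using inner_dual_basis[OF assms]
    by (intro hull_minimal convex_cone_coneK) (auto simp: coneK_def)
next
  show "coneK c \<subseteq> convex_cone hull (dual_basis c ` {1..CARD('n)})"
  proof
    fix d assume d: "d \<in> coneK c"
    have "d = (\<Sum>k\<in>{1..CARD('n)}. (c k \<bullet> d) *\<^sub>R dual_basis c k)"
    proof (rule lattice_basis_eqI[OF assms])
      fix i assume "i \<in> {1..CARD('n)}"
      then show "c i \<bullet> d = c i \<bullet> (\<Sum>k\<in>{1..CARD('n)}. (c k \<bullet> d) *\<^sub>R dual_basis c k)"
        by (simp add: inner_sum_right inner_dual_basis[OF assms] if_distrib cong: if_cong)
    qed
    also have "\<dots> \<in> convex_cone hull (dual_basis c ` {1..CARD('n)})"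
      using d unfolding coneK_def
      by (intro convex_cone_sum convex_cone_convex_cone_hull convex_cone_hull_mul hull_inc) auto
    finally show "d \<in> convex_cone hull (dual_basis c ` {1..CARD('n)})" .
  qed
qed

section \<open>Recession cone and dimension of Q\<close>

definition lex_upper_points :: "(nat \<Rightarrow> real^'n) \<Rightarrow> real^'n \<Rightarrow> (real^'n) set" where
  "lex_upper_points c xb = {x \<in> coneK c. int_vec x \<and> lex_le c xb x}"

lemma Qset_eq: "Qset c xb = convex hull lex_upper_points c xb"
  by (simp add: Qset_def lex_upper_points_def)

lemma convex_coneK: "convex (coneK c)"
  using convex_cone_coneK[of c] by (simp add: convex_cone_def)

lemma lex_upper_points_add:
  fixes c :: "nat \<Rightarrow> real^'n"
  assumes "lattice_basis c" "s \<in> lex_upper_points c xb" "a \<in> coneK c" "int_vec a"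
  shows "s + a \<in> lex_upper_points c xb"
  using assms convex_cone_add[OF convex_cone_coneK]
  unfolding lex_upper_points_def by (auto intro: int_vec_add lex_le_add_coneK)

lemma coneK_subset_rec_cone_Qset:
  fixes c :: "nat \<Rightarrow> real^'n"
  assumes "lattice_basis c"
  shows "coneK c \<subseteq> rec_cone (Qset c xb)"
proof -
  have "dual_basis c k \<in> rec_cone (Qset c xb)" for k
  proof (rule rec_coneI_convex)
    show "convex (Qset c xb)" by (simp add: Qset_def)
    have "dual_basis c k \<in> coneK c" "int_vec (dual_basis c k)"
      using inner_dual_basis[OF assms]
      by (auto simp: coneK_def intro!: lattice_basis_int_vecI[OF assms])
    then have "(\<lambda>x. dual_basis c k + x) ` lex_upper_points c xb \<subseteq> lex_upper_points c xb"
      using lex_upper_points_add[OF assms] by (auto simp: add.commute)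
    then have "(\<lambda>x. dual_basis c k + x) ` Qset c xb \<subseteq> Qset c xb"
      unfolding Qset_eq convex_hull_translation[symmetric] by (rule hull_mono)
    then show "x + dual_basis c k \<in> Qset c xb" if "x \<in> Qset c xb" for x
      using that by (auto simp: add.commute)
  qed
  then show ?thesis
    unfolding coneK_eq_convex_cone_hull_dual_basis[OF assms]
    by (intro hull_minimal convex_cone_rec_cone) auto
qed

lemma Qset_subset_coneK: "Qset c xb \<subseteq> coneK c"
  unfolding Qset_eq lex_upper_points_def by (intro hull_minimal convex_coneK) auto

lemma self_in_Qset: "xb \<in> coneK c \<Longrightarrow> int_vec xb \<Longrightarrow> xb \<in> Qset c xb"
  unfolding Qset_eq lex_upper_points_def lex_le_def by (auto intro: hull_inc)

lemma rec_cone_Qset: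
  fixes c :: "nat \<Rightarrow> real^'n"
  assumes "lattice_basis c" "xb \<in> coneK c" "int_vec xb"
  shows "rec_cone (Qset c xb) = coneK c"
  using rec_cone_subset_coneK[OF Qset_subset_coneK self_in_Qset[OF assms(2,3)]]
    coneK_subset_rec_cone_Qset[OF assms(1)] by blast

lemma aff_dim_Qset:
  fixes c :: "nat \<Rightarrow> real^'n"
  assumes "lattice_basis c" "xb \<in> coneK c" "int_vec xb"
  shows "aff_dim (Qset c xb) = int CARD('n)"
proof -
  obtain z where z: "\<forall>i\<in>{1..CARD('n)}. c i \<bullet> z = 1"
    using lattice_basis_inner_surj[OF assms(1), of "\<lambda>_. 1"] by blast
  define U where "U = (\<Inter>i\<in>{1..CARD('n)}. {x. c i \<bullet> xb < c i \<bullet> x})"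
  have "open U" unfolding U_def by (intro open_INT) (auto simp: open_halfspace_gt)
  moreover have "xb + z \<in> U" unfolding U_def using z by (simp add: inner_add_right)
  ultimately have "aff_dim U = DIM(real^'n)" by (intro aff_dim_open) auto
  moreover have "U \<subseteq> Qset c xb"
  proof
    fix x assume "x \<in> U"
    then have "c i \<bullet> xb \<le> c i \<bullet> x" if "i \<in> {1..CARD('n)}" for i
      using that unfolding U_def by (blast intro: less_imp_le)
    then have "x - xb \<in> rec_cone (Qset c xb)"
      unfolding rec_cone_Qset[OF assms] coneK_def by (simp add: inner_diff_right)
    then have "xb + (x - xb) \<in> Qset c xb"
      using self_in_Qset[OF assms(2,3)] by (rule rec_cone_add)
    then show "x \<in> Qset c xb" by simp
  qed
  ultimately have "DIM(real^'n) \<le> aff_dim (Qset c xb)" using aff_dim_subset by metis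
  then show ?thesis using aff_dim_le_DIM[of "Qset c xb"] by simp
qed

lemma Qset_eq_convex_hull_plus_coneK:
  fixes c :: "nat \<Rightarrow> real^'n"
  assumes "lattice_basis c" "V \<subseteq> Qset c xb"
    and dominated: "\<And>s. s \<in> lex_upper_points c xb \<Longrightarrow> \<exists>v\<in>V. s - v \<in> coneK c"
  shows "Qset c xb = convex hull V + coneK c"
proof
  have "s \<in> convex hull V + coneK c" if s: "s \<in> lex_upper_points c xb" for s
  proof -
    obtain v where "v \<in> V" "s - v \<in> coneK c" using dominated s by blast
    then have "v + (s - v) \<in> convex hull V + coneK c" by (intro set_plus_intro hull_inc)
    then show ?thesis by simp
  qed
  then show "Qset c xb \<subseteq> convex hull V + coneK c"
    unfolding Qset_eq by (intro hull_minimal convex_set_plus convex_convex_hull convex_coneK) auto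
next
  show "convex hull V + coneK c \<subseteq> Qset c xb"
  proof
    fix x assume "x \<in> convex hull V + coneK c"
    then obtain p d where x: "x = p + d" and p: "p \<in> convex hull V" and d: "d \<in> coneK c"
      by (rule set_plus_elim)
    have "p \<in> Qset c xb"
      using p assms(2) hull_minimal[of V "Qset c xb" convex] by (auto simp: Qset_def)
    then have "p + d \<in> Qset c xb"
      using coneK_subset_rec_cone_Qset[OF assms(1)] d by (blast intro: rec_cone_add)
    then show "x \<in> Qset c xb" by (simp add: x)
  qed
qed

section \<open>Extreme points of Q\<close>

definition lex_vertex :: "(nat \<Rightarrow> real^'n) \<Rightarrow> real^'n \<Rightarrow> nat \<Rightarrow> real^'n \<Rightarrow> bool" where
  "lex_vertex c xb k v \<longleftrightarrow> (\<forall>i\<in>{1..<k}. c i \<bullet> v = c i \<bullet> xb) \<and> c k \<bullet> v = c k \<bullet> xb + 1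
     \<and> (\<forall>i\<in>{k<..CARD('n)}. c i \<bullet> v = 0)"

lemma lex_vertex_unique:
  fixes c :: "nat \<Rightarrow> real^'n"
  assumes "lattice_basis c" "lex_vertex c xb k v" "lex_vertex c xb k w"
  shows "v = w"
proof (rule lattice_basis_eqI[OF assms(1)])
  fix i assume i: "i \<in> {1..CARD('n)}"
  consider "i < k" | "i = k" | "k < i" by linarith
  then show "c i \<bullet> v = c i \<bullet> w" using assms(2,3) i unfolding lex_vertex_def by cases auto
qed

lemma lex_vertex_exists:
  fixes c :: "nat \<Rightarrow> real^'n"
  assumes "lattice_basis c" "k \<in> {1..CARD('n)}"
  shows "\<exists>v. lex_vertex c xb k v"
proof -
  from lattice_basis_inner_surj[OF assms(1),
      of "\<lambda>i. if i < k then c i \<bullet> xb else if i = k then c k \<bullet> xb + 1 else 0"]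
  obtain v where "\<forall>i\<in>{1..CARD('n)}.
      c i \<bullet> v = (if i < k then c i \<bullet> xb else if i = k then c k \<bullet> xb + 1 else 0)"
    by blast
  then have "lex_vertex c xb k v" using assms(2) unfolding lex_vertex_def by auto
  then show ?thesis by blast
qed

lemma lex_vertex_mem_lex_upper_points:
  fixes c :: "nat \<Rightarrow> real^'n"
  assumes "lattice_basis c" "xb \<in> coneK c" "int_vec xb" "k \<in> {1..CARD('n)}" "lex_vertex c xb k v"
  shows "v \<in> lex_upper_points c xb"
proof -
  have v: "c i \<bullet> v = (if i < k then c i \<bullet> xb else if i = k then c k \<bullet> xb + 1 else 0)"
    if "i \<in> {1..CARD('n)}" for i
    using assms(5) that unfolding lex_vertex_def by auto
  have "v \<in> coneK c" using assms(2,4) v by (auto simp: coneK_def)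
  moreover have "int_vec v"
    using v int_vec_inner[OF lattice_basis_int_vec[OF assms(1)] assms(3)] assms(4)
    by (intro lattice_basis_int_vecI[OF assms(1)]) auto
  moreover have "lex_pos c CARD('n) (v - xb)"
    unfolding lex_pos_def using assms(4,5)
    by (intro bexI[of _ k]) (auto simp: lex_vertex_def inner_diff_right)
  ultimately show ?thesis unfolding lex_upper_points_def lex_le_iff_lex_pos by blast
qed

lemma lead_idx_spec:
  fixes c :: "nat \<Rightarrow> real^'n"
  assumes "lattice_basis c" "xb \<in> coneK c" "xb \<noteq> 0"
  shows "lead_idx c xb \<in> {1..CARD('n)}" "0 < c (lead_idx c xb) \<bullet> xb"
    and "\<And>j. j \<in> {lead_idx c xb<..CARD('n)} \<Longrightarrow> c j \<bullet> xb = 0"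
proof -
  define A where "A = {i\<in>{1..CARD('n)}. 0 < c i \<bullet> xb}"
  have nonneg: "0 \<le> c i \<bullet> xb" if "i \<in> {1..CARD('n)}" for i
    using assms(2) that by (simp add: coneK_def)
  have "A \<noteq> {}"
  proof
    assume "A = {}"
    then have "xb = 0" using nonneg
      by (intro lattice_basis_eqI[OF assms(1)]) (force simp: A_def)
    then show False using assms(3) by simp
  qed
  moreover have "finite A" by (simp add: A_def)
  ultimately have "Max A \<in> A" by (rule Max_in[rotated])
  moreover have lead: "lead_idx c xb = Max A" by (simp add: lead_idx_def A_def)
  ultimately show "lead_idx c xb \<in> {1..CARD('n)}" "0 < c (lead_idx c xb) \<bullet> xb"
    by (simp_all add: A_def)
  fix j assume j: "j \<in> {lead_idx c xb<..CARD('n)}"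
  then have "j \<notin> A" using Max_ge[OF \<open>finite A\<close>, of j] lead by auto
  then show "c j \<bullet> xb = 0" using j nonneg[of j] by (simp add: A_def)
qed

lemma lex_upper_point_diff_lex_vertex_in_coneK:
  fixes c :: "nat \<Rightarrow> real^'n"
  assumes lb: "lattice_basis c" and "int_vec xb" and s: "s \<in> lex_upper_points c xb"
    and i: "i \<in> {1..CARD('n)}" "\<forall>j\<in>{1..<i}. c j \<bullet> (s - xb) = 0" "0 < c i \<bullet> (s - xb)"
    and v: "lex_vertex c xb i v"
  shows "s - v \<in> coneK c"
proof -
  have sK: "s \<in> coneK c" and "int_vec s" using s by (auto simp: lex_upper_points_def)
  then have "c i \<bullet> xb + 1 \<le> c i \<bullet> s"
    using Ints_less_imp_add_one_le int_vec_inner[OF lattice_basis_int_vec[OF lb i(1)]]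
      \<open>int_vec xb\<close> i(3)
    by (simp add: inner_diff_right)
  have "0 \<le> c j \<bullet> (s - v)" if j: "j \<in> {1..CARD('n)}" for j
  proof -
    consider "j < i" | "j = i" | "i < j" by linarith
    then show ?thesis
    proof cases
      case 1
      then show ?thesis using v i(2) j unfolding lex_vertex_def by (simp add: inner_diff_right)
    next
      case 3
      then show ?thesis
        using v sK j unfolding lex_vertex_def coneK_def by (simp add: inner_diff_right)
    qed (use v \<open>c i \<bullet> xb + 1 \<le> c i \<bullet> s\<close> in \<open>simp add: lex_vertex_def inner_diff_right\<close>)
  qed
  then show ?thesis by (simp add: coneK_def)
qed

lemma lex_upper_point_diff_in_coneK:
  fixes c :: "nat \<Rightarrow> real^'n"
  assumes lb: "lattice_basis c" and xb: "xb \<in> coneK c" "xb \<noteq> 0" and s: "s \<in> lex_upper_points c xb"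
    and i: "i \<in> {1..CARD('n)}" "\<forall>j\<in>{1..<i}. c j \<bullet> (s - xb) = 0" "0 < c i \<bullet> (s - xb)"
    and "lead_idx c xb \<le> i"
  shows "s - xb \<in> coneK c"
proof -
  have "0 \<le> c j \<bullet> (s - xb)" if j: "j \<in> {1..CARD('n)}" for j
  proof -
    consider "j < i" | "j = i" | "i < j" by linarith
    then show ?thesis
    proof cases
      case 3
      then have "c j \<bullet> xb = 0" using lead_idx_spec(3)[OF lb xb] j \<open>lead_idx c xb \<le> i\<close> by simp
      then show ?thesis using s j by (simp add: lex_upper_points_def coneK_def inner_diff_right)
    qed (use i j in auto)
  qed
  then show ?thesis by (simp add: coneK_def)
qed

lemma lex_upper_points_dominated:
  fixes c :: "nat \<Rightarrow> real^'n"
  assumes lb: "lattice_basis c" and xb: "xb \<in> coneK c" "int_vec xb" "xb \<noteq> 0"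
    and s: "s \<in> lex_upper_points c xb"
  shows "\<exists>v\<in>insert xb {v. \<exists>k\<in>{1..<lead_idx c xb}. lex_vertex c xb k v}. s - v \<in> coneK c"
proof (cases "s = xb")
  case False
  then obtain i where i: "i \<in> {1..CARD('n)}" "\<forall>j\<in>{1..<i}. c j \<bullet> (s - xb) = 0" "0 < c i \<bullet> (s - xb)"
    using s unfolding lex_upper_points_def lex_le_iff_lex_pos lex_pos_def by auto
  show ?thesis
  proof (cases "i < lead_idx c xb")
    case True
    obtain v where v: "lex_vertex c xb i v" using lex_vertex_exists[OF lb i(1)] by blast
    then have "s - v \<in> coneK c" by (rule lex_upper_point_diff_lex_vertex_in_coneK[OF lb xb(2) s i])
    moreover have "v \<in> {v. \<exists>k\<in>{1..<lead_idx c xb}. lex_vertex c xb k v}" using v True i(1) by auto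
    ultimately show ?thesis by blast
  next
    case False
    then have "s - xb \<in> coneK c" by (intro lex_upper_point_diff_in_coneK[OF lb xb(1,3) s i]) simp
    then show ?thesis by blast
  qed
qed (simp add: convex_cone_contains_0[OF convex_cone_coneK])

lemma self_extreme_point_of_Qset:
  assumes "xb \<in> coneK c" "int_vec xb"
  shows "xb extreme_point_of Qset c xb"
  unfolding Qset_eq
proof (rule extreme_point_of_convex_hull_lex_min)
  show "xb \<in> lex_upper_points c xb" using assms by (simp add: lex_upper_points_def lex_le_def)
qed (auto simp: lex_upper_points_def lex_le_iff_lex_pos)

lemma lex_upper_point_coordinate_ge:
  fixes c :: "nat \<Rightarrow> real^'n"
  assumes lb: "lattice_basis c" and xb: "xb \<in> coneK c" "int_vec xb" "xb \<noteq> 0"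
    and k: "k \<in> {1..<lead_idx c xb}" and s: "s \<in> lex_upper_points c xb"
    and below: "\<forall>j\<in>{1..<k}. c j \<bullet> s = c j \<bullet> xb" and above: "\<forall>j\<in>{k<..CARD('n)}. c j \<bullet> s = 0"
  shows "c k \<bullet> xb + 1 \<le> c k \<bullet> s"
proof -
  note lead = lead_idx_spec[OF lb xb(1,3)]
  have "s \<noteq> xb" using lead(1,2) above k by force
  then obtain m where m: "m \<in> {1..CARD('n)}" "\<forall>j\<in>{1..<m}. c j \<bullet> (s - xb) = 0" "0 < c m \<bullet> (s - xb)"
    using s unfolding lex_upper_points_def lex_le_iff_lex_pos lex_pos_def by auto
  consider "m < k" | "m = k" | "k < m" by linarith
  then show ?thesis
  proof cases
    case 1
    then show ?thesis using below m by (simp add: inner_diff_right)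
  next
    case 2
    have "int_vec s" using s by (simp add: lex_upper_points_def)
    then show ?thesis
      using 2 m Ints_less_imp_add_one_le int_vec_inner[OF lattice_basis_int_vec[OF lb] xb(2)]
        int_vec_inner[OF lattice_basis_int_vec[OF lb]] by (simp add: inner_diff_right)
  next
    case 3
    then have "0 \<le> c m \<bullet> xb" "c m \<bullet> s = 0" using xb(1) m(1) above by (auto simp: coneK_def)
    then show ?thesis using m(3) by (simp add: inner_diff_right)
  qed
qed

(* Moving c^k to the end of the basis makes v^k the lexicographic minimum. *)
definition vertex_order :: "nat \<Rightarrow> nat \<Rightarrow> nat \<Rightarrow> nat" where
  "vertex_order n k j = (if j < k then j else if j < n then Suc j else k)"

lemma vertex_order_surj:
  assumes "k \<in> {1..<n}" "i \<in> {1..n}"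
  shows "\<exists>j\<in>{1..n}. vertex_order n k j = i"
proof -
  consider "i < k" | "i = k" | "k < i" by linarith
  then show ?thesis
  proof cases
    case 1 then show ?thesis using assms by (intro bexI[of _ i]) (auto simp: vertex_order_def)
  next
    case 2 then show ?thesis using assms by (intro bexI[of _ n]) (auto simp: vertex_order_def)
  next
    case 3 then show ?thesis using assms by (intro bexI[of _ "i - 1"]) (auto simp: vertex_order_def)
  qed
qed

lemma lex_vertex_lex_min:
  fixes c :: "nat \<Rightarrow> real^'n"
  assumes lb: "lattice_basis c" and xb: "xb \<in> coneK c" "int_vec xb" "xb \<noteq> 0"
    and k: "k \<in> {1..<lead_idx c xb}" and v: "lex_vertex c xb k v"
    and s: "s \<in> lex_upper_points c xb" "s \<noteq> v"
  shows "lex_pos (c \<circ> vertex_order CARD('n) k) CARD('n) (s - v)"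
proof (rule lex_posI)
  let ?n = "CARD('n)" and ?\<sigma> = "vertex_order CARD('n) k"
  have kn: "k \<in> {1..<?n}" using k lead_idx_spec(1)[OF lb xb(1,3)] by auto
  show "\<exists>i\<in>{1..?n}. (c \<circ> ?\<sigma>) i \<bullet> (s - v) \<noteq> 0"
  proof (rule ccontr)
    assume "\<not> ?thesis"
    then have "c i \<bullet> s = c i \<bullet> v" if "i \<in> {1..?n}" for i
      using vertex_order_surj[OF kn that] by (force simp: inner_diff_right)
    then have "s = v" by (rule lattice_basis_eqI[OF lb])
    then show False using s(2) by simp
  qed
  fix i assume i: "i \<in> {1..?n}" and zero: "\<forall>j\<in>{1..<i}. (c \<circ> ?\<sigma>) j \<bullet> (s - v) = 0"
  have sK: "0 \<le> c j \<bullet> s" if "j \<in> {1..?n}" for j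
    using s(1) that by (auto simp: lex_upper_points_def coneK_def)
  have v_eq: "\<forall>j\<in>{1..<k}. c j \<bullet> v = c j \<bullet> xb" "c k \<bullet> v = c k \<bullet> xb + 1" "\<forall>j\<in>{k<..?n}. c j \<bullet> v = 0"
    using v by (simp_all add: lex_vertex_def)
  consider "i < k" | "k \<le> i" "i < ?n" | "i = ?n" using i by force
  then show "0 \<le> (c \<circ> ?\<sigma>) i \<bullet> (s - v)"
  proof cases
    case 1
    then have "\<forall>j\<in>{1..<i}. c j \<bullet> (s - xb) = 0"
      using zero v_eq(1) by (auto simp: vertex_order_def inner_diff_right)
    then have "0 \<le> c i \<bullet> (s - xb)"
      using s(1) i lex_pos_first_nonneg[of c ?n "s - xb" i]
      by (cases "s = xb") (auto simp: lex_upper_points_def lex_le_iff_lex_pos)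
    then show ?thesis using 1 v_eq(1) i by (simp add: vertex_order_def inner_diff_right)
  next
    case 2
    then show ?thesis using sK[of "Suc i"] v_eq(3) by (simp add: vertex_order_def inner_diff_right)
  next
    case 3
    have "\<forall>j\<in>{1..<k}. c j \<bullet> s = c j \<bullet> xb"
    proof
      fix j assume j: "j \<in> {1..<k}"
      then have "j \<in> {1..<i}" "?\<sigma> j = j" using 3 kn by (auto simp: vertex_order_def)
      then show "c j \<bullet> s = c j \<bullet> xb" using zero v_eq(1) j by (force simp: inner_diff_right)
    qed
    moreover have "\<forall>j\<in>{k<..?n}. c j \<bullet> s = 0"
    proof
      fix j assume j: "j \<in> {k<..?n}"
      then have "j - 1 \<in> {1..<i}" "?\<sigma> (j - 1) = j" using 3 kn by (auto simp: vertex_order_def)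
      then show "c j \<bullet> s = 0" using zero v_eq(3) j by (force simp: inner_diff_right)
    qed
    ultimately have "c k \<bullet> xb + 1 \<le> c k \<bullet> s"
      by (rule lex_upper_point_coordinate_ge[OF lb xb k s(1)])
    then show ?thesis using 3 kn v_eq(2) by (simp add: vertex_order_def inner_diff_right)
  qed
qed

lemma lex_vertex_extreme_point_of_Qset:
  fixes c :: "nat \<Rightarrow> real^'n"
  assumes lb: "lattice_basis c" and xb: "xb \<in> coneK c" "int_vec xb" "xb \<noteq> 0"
    and k: "k \<in> {1..<lead_idx c xb}" and v: "lex_vertex c xb k v"
  shows "v extreme_point_of Qset c xb"
  unfolding Qset_eq
proof (rule extreme_point_of_convex_hull_lex_min)
  show "v \<in> lex_upper_points c xb"
    using k lead_idx_spec(1)[OF lb xb(1,3)]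
    by (intro lex_vertex_mem_lex_upper_points[OF lb xb(1,2) _ v]) auto
qed (rule lex_vertex_lex_min[OF assms])

lemma finite_lex_vertices:
  fixes c :: "nat \<Rightarrow> real^'n"
  assumes "lattice_basis c" "finite I"
  shows "finite {v. \<exists>k\<in>I. lex_vertex c xb k v}"
proof -
  have "finite {v. lex_vertex c xb k v}" for k
  proof (cases "\<exists>v. lex_vertex c xb k v")
    case True
    then obtain v where "lex_vertex c xb k v" by blast
    then have "{v. lex_vertex c xb k v} = {v}" using lex_vertex_unique[OF assms(1)] by blast
    then show ?thesis by simp
  qed simp
  moreover have "{v. \<exists>k\<in>I. lex_vertex c xb k v} = (\<Union>k\<in>I. {v. lex_vertex c xb k v})" by blast
  ultimately show ?thesis using assms(2) by simp
qed

lemma Qset_zero: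
  fixes c :: "nat \<Rightarrow> real^'n"
  assumes "lattice_basis c"
  shows "Qset c 0 = coneK c"
proof
  show "coneK c \<subseteq> Qset c 0"
    using coneK_subset_rec_cone_Qset[OF assms] rec_cone_add self_in_Qset[of 0 c]
    by (force simp: convex_cone_contains_0[OF convex_cone_coneK] int_vec_def)
qed (rule Qset_subset_coneK)

lemma Qset_eq_convex_hull_lex_vertices_plus_coneK:
  fixes c :: "nat \<Rightarrow> real^'n"
  assumes lb: "lattice_basis c" and xb: "xb \<in> coneK c" "int_vec xb" "xb \<noteq> 0"
  shows "Qset c xb =
    convex hull (insert xb {v. \<exists>k\<in>{1..<lead_idx c xb}. lex_vertex c xb k v}) + coneK c"
proof (rule Qset_eq_convex_hull_plus_coneK[OF lb])
  show "insert xb {v. \<exists>k\<in>{1..<lead_idx c xb}. lex_vertex c xb k v} \<subseteq> Qset c xb"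
    using self_in_Qset[OF xb(1,2)] lex_vertex_extreme_point_of_Qset[OF lb xb]
    by (auto simp: extreme_point_of_def)
qed (rule lex_upper_points_dominated[OF lb xb])

lemma polyhedron_Qset:
  fixes c :: "nat \<Rightarrow> real^'n"
  assumes lb: "lattice_basis c" and xb: "xb \<in> coneK c" "int_vec xb"
  shows "polyhedron (Qset c xb)"
proof (cases "xb = 0")
  case True
  then show ?thesis
    by (simp add: Qset_zero[OF lb] coneK_eq_convex_cone_hull_dual_basis[OF lb]
        polyhedron_convex_cone_hull)
next
  case False
  then show ?thesis
    using finite_lex_vertices[OF lb, of "{1..<lead_idx c xb}" xb]
    by (simp add: Qset_eq_convex_hull_lex_vertices_plus_coneK[OF lb xb False]
        coneK_eq_convex_cone_hull_dual_basis[OF lb] polyhedron_convex_hull_plus_convex_cone_hull)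
qed

lemma extreme_points_Qset:
  fixes c :: "nat \<Rightarrow> real^'n"
  assumes lb: "lattice_basis c" and xb: "xb \<in> coneK c" "int_vec xb" "xb \<noteq> 0"
  shows "{x. x extreme_point_of Qset c xb} =
    insert xb {v. \<exists>k\<in>{1..<lead_idx c xb}. lex_vertex c xb k v}"
  using extreme_point_of_convex_hull_plus_cone[OF convex_cone_coneK]
    Qset_eq_convex_hull_lex_vertices_plus_coneK[OF assms]
    self_extreme_point_of_Qset[OF xb(1,2)] lex_vertex_extreme_point_of_Qset[OF assms]
  by auto

theorem lemma3:
  fixes c :: "nat \<Rightarrow> real^'n" and xb :: "real^'n"
  assumes "lattice_basis c"
    and "xb \<in> coneK c" and "int_vec xb"
  shows "rec_cone (Qset c xb) = coneK c \<and> polyhedron (Qset c xb)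
         \<and> aff_dim (Qset c xb) = int CARD('n)
         \<and> (xb \<noteq> 0 \<longrightarrow>
             (\<forall>k\<in>{1..<lead_idx c xb}. \<exists>!v.
                (\<forall>i\<in>{1..<k}. c i \<bullet> v = c i \<bullet> xb) \<and> c k \<bullet> v = c k \<bullet> xb + 1
                \<and> (\<forall>i\<in>{k<..CARD('n)}. c i \<bullet> v = 0))
           \<and> {x. x extreme_point_of (Qset c xb)} =
               insert xb {v. \<exists>k\<in>{1..<lead_idx c xb}.
                (\<forall>i\<in>{1..<k}. c i \<bullet> v = c i \<bullet> xb) \<and> c k \<bullet> v = c k \<bullet> xb + 1
                \<and> (\<forall>i\<in>{k<..CARD('n)}. c i \<bullet> v = 0)})"
proof -
  have "\<exists>!v. lex_vertex c xb k v" if "xb \<noteq> 0" "k \<in> {1..<lead_idx c xb}" for k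
    using that lead_idx_spec(1)[OF assms(1,2) \<open>xb \<noteq> 0\<close>]
      lex_vertex_exists[OF assms(1)] lex_vertex_unique[OF assms(1)]
    by (metis atLeastAtMost_iff atLeastLessThan_iff less_imp_le_nat order.trans)
  then show ?thesis
    using rec_cone_Qset[OF assms] polyhedron_Qset[OF assms] aff_dim_Qset[OF assms]
      extreme_points_Qset[OF assms]
    unfolding lex_vertex_def[symmetric] by blast
qed

end
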